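(* Let $\Lambda\subseteq\Sigma_A$ and $\Gamma\subseteq\Sigma_B$ be shift spaces. Take $d\in B$ and suppose $\Phi:\Lambda\to\Gamma$ is a map such that $\Phi(\mathcal O)=(ddd\dots)$ (the constant sequence with symbol $d$) and such that $C_\varepsilon:=\Phi^{-1}(\mathcal O)$ is finitely defined in $\Lambda$ in the case that $\mathcal O\in\Gamma$. Then $\Phi$ is continuous and commutes with the shift map if, and only if, $\Phi$ is a sliding block code given by $\bigl(\Phi(x)\bigr)_n=\sum_{a\in L_\Gamma\cup\{\varepsilon\}}a\mathbf{1}_{C_a}\circ\sigma^{n-1}(x)$ such that, for all $a\in L_\Gamma$, the set $C_a$ is a finite (possibly empty) union of generalized cylinders of $\Lambda$, with the following properties: (1) $C_a$ is empty for all but finitely many $a\in L_\Gamma$; and (2) for each $M\ge1$ there exists a finite set $F_M\subset L_\Lambda$ such that $\sigma^{n-1}\bigl(Z(\mathcal O,F_M)\cap\Lambda\bigr)\subseteq C_d$ for all $1\le n\le M$.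
   Context: Alphabets and sequences: $A$ (and similarly $B$) is a countable discrete alphabet, finite or infinite. Let $\varepsilon$ be a new symbol (the empty letter), $\tilde A=A\cup\{\varepsilon\}$. Put $\Sigma_A^{\mathrm{inf}}=A^{\mathbb N}$ and let $\Sigma_A^{\mathrm{fin}}$ be the set of sequences $(x_i)_{i\in\mathbb N}$ in $\tilde A$ containing at least one $\varepsilon$ such that $x_i=\varepsilon$ implies $x_{i+1}=\varepsilon$. The Ott–Tomforde–Willis full shift is $\Sigma_A=\Sigma_A^{\mathrm{inf}}$ if $A$ is finite and $\Sigma_A=\Sigma_A^{\mathrm{inf}}\cup\Sigma_A^{\mathrm{fin}}$ if $A$ is infinite. The length of $x$ is $l(x)=\min\{k-1: x_k=\varepsilon\}$ ($=\infty$ for $x\in A^{\mathbb N}$); a finite sequence of length $k$ is identified with the word $x_1\dots x_k$; the constant sequence $\mathcal O=(\varepsilon\varepsilon\varepsilon\dots)$ is the empty sequence. For $x\in\Sigma_A^{\mathrm{fin}}$ and finite $F\subset A$, the generalized cylinder is $Z(x,F)=\{y\in\Sigma_A: y_i=x_i \text{ for } 1\le i\le l(x),\ y_{l(x)+1}\notin F\}$ (so $Z(\mathcal O,F)=\{y: y_1\notin F\}$). $\Sigma_A$ carries the topology generated by the generalized cylinders. The shift map is $\sigma((x_i)_{i})=(x_{i+1})_i$ (so $\sigma(\mathcal O)=\mathcal O$). For $\Lambda\subseteq\Sigma_A$: $\Lambda^{\mathrm{fin}}=\Lambda\cap\Sigma_A^{\mathrm{fin}}$, $\Lambda^{\mathrm{inf}}=\Lambda\cap\Sigma_A^{\mathrm{inf}}$;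 $B_n(\Lambda)\subseteq\tilde A^n$ is the set of words of length $n$ occurring as consecutive subblocks of elements of $\Lambda$, $B(\Lambda)=\bigcup_{n}B_n(\Lambda)$, $L_\Lambda=B_1(\Lambda)\setminus\{\varepsilon\}$. Follower set: $\mathcal F(\Lambda,a)=\{b\in B_1(\Lambda): ab\in B_{n+1}(\Lambda)\}$ for $a\in B_n(\Lambda)$. A shift space is $\Lambda\subseteq\Sigma_A$ that is closed, satisfies $\sigma(\Lambda)\subseteq\Lambda$, and has the infinite extension property: $\mathcal O\in\Lambda$ iff $L_\Lambda$ is infinite, and a finite sequence $x\neq\mathcal O$ lies in $\Lambda$ iff $|\mathcal F(\Lambda,x)|=\infty$. Generalized cylinders of $\Lambda$ are the sets $Z(x,F)\cap\Lambda$. Finitely defined sets: $C\subseteq\Lambda$ is finitely defined in $\Lambda$ if there exist $I,J\subseteq\mathbb N$, integers $\ell_i,n_j\ge0$ and words $b_i,d_j\in B(\Sigma_A)$ with $C=\{x\in\Lambda: (x_1\dots x_{1+\ell_i})=b_i\text{ for some } i\in I\}$ and $\Lambda\setminus C=\{x\in\Lambda: (x_1\dots x_{1+n_j})=d_j \text{ for some } j\in J\}$. Sliding block codes: given a partition $\{C_a\}_{a\in B\cup\{\varepsilon\}}$ of a shift space $\Lambda$ such that each $C_a$ is finitely defined in $\Lambda$ and $\sigma(C_\varepsilon)\subseteq C_\varepsilon$, the map $\Phi:\Lambda\to\Sigma_B$ with $(\Phi(x))_n$ equal to the unique $a$ with $\sigma^{n-1}(x)\in C_a$ is a sliding block code.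 *)

theory Defs
  imports "HOL-Analysis.Analysis"
begin

text \<open>Sequences over the extended alphabet: None plays the role of the empty letter.
  Indexing is 0-based: position i in Isabelle is position i+1 in the paper.\<close>

type_synonym 'a seq = "nat \<Rightarrow> 'a option"

definition Sigma_inf :: "'a seq set" where
  "Sigma_inf = {x. \<forall>i. x i \<noteq> None}"

definition Sigma_fin :: "'a seq set" where
  "Sigma_fin = {x. (\<exists>i. x i = None) \<and> (\<forall>i. x i = None \<longrightarrow> x (Suc i) = None)}"

definition full_shift :: "'a::countable seq set" where
  "full_shift = (if finite (UNIV :: 'a set) then Sigma_inf else Sigma_inf \<union> Sigma_fin)"

definition empty_seq :: "'a seq" where
  "empty_seq = (\<lambda>_. None)"

definition seq_len :: "'a seq \<Rightarrow> nat" where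
  "seq_len x = (LEAST i. x i = None)"

definition seq_word :: "'a seq \<Rightarrow> 'a option list" where
  "seq_word x = map x [0..<seq_len x]"

definition prefix_word :: "'a seq \<Rightarrow> nat \<Rightarrow> 'a option list" where
  "prefix_word x n = map x [0..<n]"

definition gen_cyl :: "'a::countable seq \<Rightarrow> 'a set \<Rightarrow> 'a seq set" where
  "gen_cyl x F = {y \<in> full_shift. (\<forall>i < seq_len x. y i = x i) \<and> y (seq_len x) \<notin> Some ` F}"

definition gen_cylinders :: "'a::countable seq set set" where
  "gen_cylinders = {gen_cyl x F | x F. x \<in> Sigma_fin \<and> finite F}"

definition shift_top :: "'a::countable seq topology" where
  "shift_top = topology_generated_by gen_cylinders"

definition shift :: "'a seq \<Rightarrow> 'a seq" where
  "shift x = (\<lambda>i. x (Suc i))"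

definition blocks :: "'a seq set \<Rightarrow> 'a option list set" where
  "blocks L = {w. \<exists>x\<in>L. \<exists>i. w = map (\<lambda>j. x (i + j)) [0..<length w]}"

definition letters :: "'a seq set \<Rightarrow> 'a set" where
  "letters L = {a. [Some a] \<in> blocks L}"

definition follower :: "'a seq set \<Rightarrow> 'a option list \<Rightarrow> 'a option set" where
  "follower L w = {b. [b] \<in> blocks L \<and> w @ [b] \<in> blocks L}"

definition shift_space :: "'a::countable seq set \<Rightarrow> bool" where
  "shift_space L \<longleftrightarrow>
     L \<subseteq> full_shift \<and>
     closedin shift_top L \<and>
     shift ` L \<subseteq> L \<and>
     (empty_seq \<in> L \<longleftrightarrow> infinite (letters L)) \<and>
     (\<forall>x \<in> full_shift \<inter> Sigma_fin. x \<noteq> empty_seq \<longrightarrow>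
         (x \<in> L \<longleftrightarrow> infinite (follower L (seq_word x))))"

text \<open>finitely defined sets (words b_i, d_j of length 1 + l_i, 1 + n_j respectively)\<close>
definition finitely_defined :: "'a::countable seq set \<Rightarrow> 'a seq set \<Rightarrow> bool" where
  "finitely_defined L C \<longleftrightarrow> C \<subseteq> L \<and>
     (\<exists>(I::nat set) (J::nat set) (l::nat \<Rightarrow> nat) (n::nat \<Rightarrow> nat)
        (b::nat \<Rightarrow> 'a option list) (d::nat \<Rightarrow> 'a option list).
        (\<forall>i\<in>I. b i \<in> blocks (full_shift :: 'a seq set)) \<and>
        (\<forall>j\<in>J. d j \<in> blocks (full_shift :: 'a seq set)) \<and>
        C = {x \<in> L. \<exists>i\<in>I. prefix_word x (1 + l i) = b i} \<and>
        L - C = {x \<in> L. \<exists>j\<in>J. prefix_word x (1 + n j) = d j})"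

definition sliding_block_code ::
  "'a::countable seq set \<Rightarrow> ('b option \<Rightarrow> 'a seq set) \<Rightarrow> ('a seq \<Rightarrow> 'b seq) \<Rightarrow> bool" where
  "sliding_block_code L C Phi \<longleftrightarrow>
     (\<forall>a b. a \<noteq> b \<longrightarrow> C a \<inter> C b = {}) \<and>
     (\<Union>a. C a) = L \<and>
     (\<forall>a. finitely_defined L (C a)) \<and>
     shift ` C None \<subseteq> C None \<and>
     (\<forall>x\<in>L. \<forall>n. Phi x n = (THE a. (shift ^^ n) x \<in> C a))"

end

theory Submission
  imports Defs
begin

text \<open>The full shift is compact: if an open cover had no finite subcover, Koenig's lemma would
  give an infinite word none of whose cylinder cones has a finite subcover, although some
  neighbourhood of that word contains such a cone. Hence a clopen subset of a shift space is a
  finite union of generalized cylinders, so membership in it depends only on a bounded prefix: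
  it is finitely defined.

  If \<open>Phi\<close> is continuous and commutes with the shift, the sets \<open>C a\<close> of points whose image
  starts with the letter \<open>a\<close> partition \<open>Lam\<close> into open sets. For the empty letter this uses
  that, as \<open>Phi\<close> maps the empty sequence to \<open>ddd...\<close>, every point of \<open>C None\<close> is an infinite
  sequence, and on infinite sequences the finitely defining prefixes are cylinders. So all
  \<open>C a\<close> are clopen, compactness leaves only finitely many of them nonempty, and condition (2) is
  continuity at the empty sequence. Conversely, the \<open>n\<close>-th letter of \<open>Phi x\<close> is the first
  letter of the image of \<open>shift\<^sup>n x\<close>; \<open>shift\<^sup>n\<close> is continuous at points whose first \<open>n\<close>
  letters are nonempty, and near every other point this letter is \<open>d\<close> by condition (2).\<close>

lemma full_shift_iff:
  "(x::'a::countable seq) \<in> full_shift \<longleftrightarrow>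
     (\<forall>i. x i = None \<longrightarrow> x (Suc i) = None) \<and> (finite (UNIV::'a set) \<longrightarrow> (\<forall>i. x i \<noteq> None))"
  by (auto simp: full_shift_def Sigma_inf_def Sigma_fin_def) (metis option.distinct(1))+

lemma full_shift_None_mono:
  assumes "x \<in> full_shift" "x i = None" "i \<le> j"
  shows "x j = None"
  using assms(3,2)
proof (induction j rule: dec_induct)
  case (step n)
  then show ?case using assms(1) by (simp add: full_shift_iff)
qed

lemma funpow_shift_apply: "(shift ^^ n) x j = x (n + j)"
  by (induction n arbitrary: j) (simp_all add: shift_def)

lemma funpow_shift_in_full_shift: "x \<in> full_shift \<Longrightarrow> (shift ^^ n) x \<in> full_shift"
  by (simp add: full_shift_iff funpow_shift_apply)

lemma funpow_shift_empty_seq: "(shift ^^ n) empty_seq = empty_seq"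
  by (simp add: fun_eq_iff funpow_shift_apply empty_seq_def)

lemma funpow_shift_eq_empty_seq:
  assumes "x \<in> full_shift" "x n = None"
  shows "(shift ^^ n) x = empty_seq"
  using full_shift_None_mono[OF assms] by (simp add: fun_eq_iff funpow_shift_apply empty_seq_def)

lemma funpow_shift_in: "shift ` L \<subseteq> L \<Longrightarrow> x \<in> L \<Longrightarrow> (shift ^^ n) x \<in> L"
  by (induction n) auto

lemma funpow_shift_commute:
  assumes "\<forall>x\<in>L. f (shift x) = shift (f x)" "shift ` L \<subseteq> L" "x \<in> L"
  shows "f ((shift ^^ n) x) = (shift ^^ n) (f x)"
proof (induction n)
  case (Suc n)
  then show ?case using assms funpow_shift_in[OF assms(2,3), of n] by simp
qed simp

lemma prefix_word_eq_iff: "prefix_word x N = prefix_word y N \<longleftrightarrow> (\<forall>i<N. x i = y i)"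
  unfolding prefix_word_def by (auto simp: map_eq_conv)

section \<open>Generalized cylinders\<close>

text \<open>\<open>cyl w F\<close> is the generalized cylinder \<open>Z(x, F)\<close> for the finite sequence \<open>x\<close> spelled by
  the word \<open>w\<close>.\<close>

definition cyl :: "'a::countable list \<Rightarrow> 'a set \<Rightarrow> 'a seq set" where
  "cyl w F = {y \<in> full_shift. (\<forall>i<length w. y i = Some (w!i)) \<and> y (length w) \<notin> Some ` F}"

definition seq_of_word :: "'a list \<Rightarrow> 'a seq" where
  "seq_of_word w i = (if i < length w then Some (w!i) else None)"

lemma gen_cyl_eq_cyl: "gen_cyl x F = cyl (map (the \<circ> x) [0..<seq_len x]) F"
proof -
  have "x i \<noteq> None" if "i < seq_len x" for i
    using that not_less_Least unfolding seq_len_def by blast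
  then show ?thesis by (auto simp: gen_cyl_def cyl_def)
qed

lemma gen_cyl_seq_of_word: "gen_cyl (seq_of_word w) F = cyl w F"
proof -
  have "seq_len (seq_of_word w) = length w"
    unfolding seq_len_def seq_of_word_def by (rule Least_equality) (auto split: if_splits)
  then show ?thesis by (auto simp: gen_cyl_def cyl_def seq_of_word_def)
qed

lemma cyl_in_gen_cylinders: "finite F \<Longrightarrow> cyl w F \<in> gen_cylinders"
proof -
  assume "finite F"
  moreover have "seq_of_word w \<in> Sigma_fin"
    unfolding Sigma_fin_def seq_of_word_def by (auto intro: exI[of _ "length w"])
  ultimately show ?thesis
    unfolding gen_cylinders_def by (auto simp flip: gen_cyl_seq_of_word)
qed

lemma gen_cylinders_eq: "gen_cylinders = {cyl w F | w F. finite F}"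
  using cyl_in_gen_cylinders unfolding gen_cylinders_def gen_cyl_eq_cyl by blast

lemma gen_cyl_empty_seq: "gen_cyl empty_seq F = cyl [] F"
proof -
  have "seq_len (empty_seq :: 'a seq) = 0" by (simp add: seq_len_def empty_seq_def)
  then show ?thesis by (simp add: gen_cyl_eq_cyl)
qed

lemma cyl_subset_full_shift: "cyl w F \<subseteq> full_shift"
  by (auto simp: cyl_def)

lemma cyl_Nil_empty: "cyl [] {} = full_shift"
  by (auto simp: cyl_def)

lemma cyl_if_agrees:
  "z \<in> cyl w F \<Longrightarrow> y \<in> full_shift \<Longrightarrow> \<forall>i\<le>length w. y i = z i \<Longrightarrow> y \<in> cyl w F"
  by (auto simp: cyl_def)

lemma cyl_snoc: "y \<in> cyl w {} \<Longrightarrow> y (length w) = Some a \<Longrightarrow> y \<in> cyl (w @ [a]) {}"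
  by (auto simp: cyl_def nth_append less_Suc_eq)

lemma cyl_append: "cyl (u @ v) G = {y \<in> cyl u {}. (shift ^^ length u) y \<in> cyl v G}"
proof -
  have "(\<forall>i<length u + length v. y i = Some ((u @ v) ! i)) \<longleftrightarrow>
        (\<forall>i<length u. y i = Some (u ! i)) \<and> (\<forall>j<length v. y (length u + j) = Some (v ! j))" for y
    by (auto simp: nth_append) (metis add_diff_inverse_nat nat_add_left_cancel_less)
  then show ?thesis by (auto simp: cyl_def funpow_shift_apply funpow_shift_in_full_shift)
qed

lemma cyl_subset_cyl_if_longer:
  assumes "x \<in> cyl w F" "x \<in> cyl v G" "length w < length v"
  shows "cyl v G \<subseteq> cyl w F"
  using assms by (auto simp: cyl_def)

lemma cyl_eq_word_if_same_length:
  assumes "x \<in> cyl w F" "x \<in> cyl v G" "length w = length v"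
  shows "w = v"
  using assms by (auto simp: cyl_def intro!: nth_equalityI)

lemma cyl_Int:
  assumes "x \<in> cyl w F" "x \<in> cyl v G"
  shows "\<exists>u H. H \<subseteq> F \<union> G \<and> cyl w F \<inter> cyl v G = cyl u H"
proof (cases "length w" "length v" rule: linorder_cases)
  case less
  then show ?thesis using cyl_subset_cyl_if_longer[OF assms] by blast
next
  case equal
  then have "cyl w F \<inter> cyl v G = cyl w (F \<union> G)"
    using cyl_eq_word_if_same_length[OF assms] by (auto simp: cyl_def)
  then show ?thesis by blast
next
  case greater
  then show ?thesis using cyl_subset_cyl_if_longer[OF assms(2,1)] by blast
qed

lemma openin_cyl: "finite F \<Longrightarrow> openin shift_top (cyl w F)"
  unfolding shift_top_def by (rule topology_generated_by_Basis) (auto simp: gen_cylinders_eq)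

lemma topspace_shift_top: "topspace shift_top = full_shift"
  using cyl_subset_full_shift cyl_Nil_empty
  unfolding shift_top_def topology_generated_by_topspace gen_cylinders_eq by blast

lemma openin_shift_top_iff:
  "openin shift_top U \<longleftrightarrow> (\<forall>x\<in>U. \<exists>w F. finite F \<and> x \<in> cyl w F \<and> cyl w F \<subseteq> U)"
proof
  assume "openin shift_top U"
  then have "generate_topology_on gen_cylinders U"
    unfolding shift_top_def by (rule openin_topology_generated_by)
  then show "\<forall>x\<in>U. \<exists>w F. finite F \<and> x \<in> cyl w F \<and> cyl w F \<subseteq> U"
  proof induction
    case (Int a b)
    show ?case
    proof
      fix x assume "x \<in> a \<inter> b"
      then obtain w F v G where "finite F" "x \<in> cyl w F" "cyl w F \<subseteq> a"
        and "finite G" "x \<in> cyl v G" "cyl v G \<subseteq> b"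
        using Int.IH by (meson IntD1 IntD2)
      moreover obtain u H where "H \<subseteq> F \<union> G" "cyl w F \<inter> cyl v G = cyl u H"
        using cyl_Int[OF \<open>x \<in> cyl w F\<close> \<open>x \<in> cyl v G\<close>] by blast
      ultimately have "finite H \<and> x \<in> cyl u H \<and> cyl u H \<subseteq> a \<inter> b"
        using finite_subset by blast
      then show "\<exists>w F. finite F \<and> x \<in> cyl w F \<and> cyl w F \<subseteq> a \<inter> b" by blast
    qed
  next
    case (UN K)
    then show ?case by (meson UnionE UnionI subsetI subset_iff)
  next
    case (Basis s)
    then obtain w F where "s = cyl w F" "finite F" by (auto simp: gen_cylinders_eq)
    then show ?case by blast
  qed simp
next
  assume "\<forall>x\<in>U. \<exists>w F. finite F \<and> x \<in> cyl w F \<and> cyl w F \<subseteq> U"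
  then show "openin shift_top U"
    by (subst openin_subopen) (blast intro: openin_cyl)
qed

lemma openin_subtopology_shift_top_iff:
  "openin (subtopology shift_top L) U \<longleftrightarrow>
     U \<subseteq> L \<and> (\<forall>x\<in>U. \<exists>w F. finite F \<and> x \<in> cyl w F \<and> cyl w F \<inter> L \<subseteq> U)"
proof
  assume "openin (subtopology shift_top L) U"
  then obtain T where T: "openin shift_top T" "U = T \<inter> L"
    by (auto simp: openin_subtopology)
  show "U \<subseteq> L \<and> (\<forall>x\<in>U. \<exists>w F. finite F \<and> x \<in> cyl w F \<and> cyl w F \<inter> L \<subseteq> U)"
  proof (intro conjI ballI)
    fix x assume "x \<in> U"
    then obtain w F where "finite F" "x \<in> cyl w F" "cyl w F \<subseteq> T"
      using T unfolding openin_shift_top_iff by blast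
    then show "\<exists>w F. finite F \<and> x \<in> cyl w F \<and> cyl w F \<inter> L \<subseteq> U"
      using T(2) by blast
  qed (use T in blast)
next
  assume U: "U \<subseteq> L \<and> (\<forall>x\<in>U. \<exists>w F. finite F \<and> x \<in> cyl w F \<and> cyl w F \<inter> L \<subseteq> U)"
  show "openin (subtopology shift_top L) U"
  proof (subst openin_subopen, intro ballI)
    fix x assume "x \<in> U"
    then obtain w F where "finite F" "x \<in> cyl w F" "cyl w F \<inter> L \<subseteq> U"
      using U by blast
    moreover have "openin (subtopology shift_top L) (cyl w F \<inter> L)"
      using openin_subtopology_Int[OF openin_cyl[OF \<open>finite F\<close>]] .
    ultimately show "\<exists>T. openin (subtopology shift_top L) T \<and> x \<in> T \<and> T \<subseteq> U"
      using U \<open>x \<in> U\<close> by blast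
  qed
qed

lemma full_shift_diff_cyl:
  "full_shift - cyl w F = (\<Union>i<length w. cyl (take i w) {w!i}) \<union> (\<Union>a\<in>F. cyl (w @ [a]) {})"
proof (intro equalityI subsetI)
  fix y assume y: "y \<in> full_shift - cyl w F"
  show "y \<in> (\<Union>i<length w. cyl (take i w) {w!i}) \<union> (\<Union>a\<in>F. cyl (w @ [a]) {})"
  proof (cases "\<exists>i<length w. y i \<noteq> Some (w!i)")
    case True
    then obtain i where "i < length w" "y i \<noteq> Some (w!i)" "\<forall>j<i. y j = Some (w!j)"
      by (auto simp: exists_least_iff[of "\<lambda>i. i < length w \<and> y i \<noteq> Some (w!i)"])
    then have "y \<in> cyl (take i w) {w!i}" using y by (auto simp: cyl_def)
    then show ?thesis using \<open>i < length w\<close> by blast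
  next
    case False
    then obtain a where "a \<in> F" "y (length w) = Some a" using y by (auto simp: cyl_def)
    moreover have "y \<in> cyl w {}" using False y by (auto simp: cyl_def)
    ultimately show ?thesis using cyl_snoc by blast
  qed
qed (auto simp: cyl_def nth_append)

lemma closedin_cyl: "closedin shift_top (cyl w F)"
  unfolding closedin_def topspace_shift_top full_shift_diff_cyl
  by (auto intro!: openin_cyl simp: cyl_subset_full_shift)

lemma mem_cyl_prefix:
  assumes "x \<in> full_shift" "\<forall>j<n. x j \<noteq> None"
  shows "x \<in> cyl (map (the \<circ> x) [0..<n]) {}"
  using assms by (auto simp: cyl_def)

lemma prefix_word_eq_if_mem_cyl_prefix:
  assumes "y \<in> cyl (map (the \<circ> x) [0..<n]) {}" "\<forall>j<n. x j \<noteq> None"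
  shows "prefix_word y n = prefix_word x n"
  using assms by (auto simp: cyl_def prefix_word_eq_iff)

lemma funpow_shift_continuous_at:
  assumes L: "L \<subseteq> full_shift" "shift ` L \<subseteq> L"
    and D: "openin (subtopology shift_top L) D"
    and x: "x \<in> L" "(shift ^^ i) x \<in> D" "\<forall>j<i. x j \<noteq> None"
  shows "\<exists>U. openin (subtopology shift_top L) U \<and> x \<in> U \<and> (shift ^^ i) ` U \<subseteq> D"
proof -
  obtain v G where vG: "finite G" "(shift ^^ i) x \<in> cyl v G" "cyl v G \<inter> L \<subseteq> D"
    using D x(2) unfolding openin_subtopology_shift_top_iff by blast
  define u where "u = map (the \<circ> x) [0..<i]"
  have "x \<in> cyl u {}"
    unfolding u_def using mem_cyl_prefix L(1) x(1,3) by blast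
  then have "x \<in> cyl (u @ v) G"
    using vG(2) by (simp add: cyl_append u_def)
  moreover have "(shift ^^ i) y \<in> D" if "y \<in> cyl (u @ v) G \<inter> L" for y
  proof -
    have "(shift ^^ i) y \<in> cyl v G" using that by (simp add: cyl_append u_def)
    moreover have "(shift ^^ i) y \<in> L" using that funpow_shift_in[OF L(2)] by blast
    ultimately show ?thesis using vG(3) by blast
  qed
  moreover have "openin (subtopology shift_top L) (cyl (u @ v) G \<inter> L)"
    using openin_subtopology_Int[OF openin_cyl[OF vG(1)]] .
  ultimately show ?thesis using x(1) by blast
qed

lemma continuous_map_into_shift_top:
  fixes Phi :: "'a \<Rightarrow> 'b::countable seq"
  assumes into: "Phi ` topspace X \<subseteq> full_shift"
    and letter: "\<And>i a. openin X {x \<in> topspace X. Phi x i = Some a}"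
    and avoid: "\<And>i H. finite H \<Longrightarrow> openin X {x \<in> topspace X. Phi x i \<notin> Some ` H}"
  shows "continuous_map X shift_top Phi"
  unfolding shift_top_def
proof (rule continuous_on_generated_topo)
  show "Phi ` topspace X \<subseteq> \<Union>gen_cylinders"
    using into topspace_shift_top[where 'a = 'b] unfolding shift_top_def
    by (simp only: topology_generated_by_topspace)
next
  fix U :: "'b seq set" assume "U \<in> gen_cylinders"
  then obtain w H where U: "U = cyl w H" "finite H" by (auto simp: gen_cylinders_eq)
  have "Phi -` U \<inter> topspace X =
        (\<Inter>i<length w. {x \<in> topspace X. Phi x i = Some (w ! i)}) \<inter> topspace X \<inter>
        {x \<in> topspace X. Phi x (length w) \<notin> Some ` H}"
    using into unfolding U(1) cyl_def by auto
  moreover have "openin X ((\<Inter>i<length w. {x \<in> topspace X. Phi x i = Some (w ! i)})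
                             \<inter> topspace X \<inter> {x \<in> topspace X. Phi x (length w) \<notin> Some ` H})"
    using letter avoid[OF U(2)] by (intro openin_Int openin_INT) auto
  ultimately show "openin X (Phi -` U \<inter> topspace X)" by simp
qed

section \<open>Compactness of the full shift\<close>

lemma cyl_subset_Union_snoc_if_finite_alphabet:
  assumes "finite (UNIV :: 'a::countable set)"
  shows "cyl (w :: 'a list) {} \<subseteq> (\<Union>a. cyl (w @ [a]) {})"
proof -
  have "y \<in> (\<Union>a. cyl (w @ [a]) {})" if y: "y \<in> cyl w {}" for y
  proof -
    have "y (length w) \<noteq> None"
      using y assms by (simp add: cyl_def full_shift_iff)
    then obtain a where "y (length w) = Some a" by auto
    then show ?thesis using y cyl_snoc by blast
  qed
  then show ?thesis by blast
qed

lemma seq_of_word_neighbourhood: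
  assumes "seq_of_word w \<in> cyl v G"
  shows "cyl w {} - (\<Union>a\<in>G. cyl (w @ [a]) {}) \<subseteq> cyl v G"
proof
  fix y assume y: "y \<in> cyl w {} - (\<Union>a\<in>G. cyl (w @ [a]) {})"
  have v: "\<forall>i<length v. seq_of_word w i = Some (v ! i)" "seq_of_word w (length v) \<notin> Some ` G"
    using assms by (simp_all add: cyl_def)
  have "length v \<le> length w"
  proof (rule ccontr)
    assume "\<not> length v \<le> length w"
    then have "seq_of_word w (length w) = Some (v ! length w)" using v(1) by simp
    then show False by (simp add: seq_of_word_def)
  qed
  have "y (length v) \<notin> Some ` G"
  proof (cases "length v = length w")
    case True
    show ?thesis
    proof
      assume "y (length v) \<in> Some ` G"
      then obtain a where "a \<in> G" "y (length w) = Some a" using True by auto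
      then show False using y cyl_snoc by blast
    qed
  next
    case False
    then have "y (length v) = seq_of_word w (length v)"
      using y \<open>length v \<le> length w\<close> by (simp add: cyl_def seq_of_word_def)
    then show ?thesis using v(2) by simp
  qed
  moreover have "y i = Some (v ! i)" if "i < length v" for i
    using that y v(1) \<open>length v \<le> length w\<close> by (auto simp: cyl_def seq_of_word_def)
  ultimately show "y \<in> cyl v G"
    using y by (simp add: cyl_def)
qed

definition finitely_covered :: "'a set set \<Rightarrow> 'a set \<Rightarrow> bool" where
  "finitely_covered \<U> K \<longleftrightarrow> (\<exists>\<F>. finite \<F> \<and> \<F> \<subseteq> \<U> \<and> K \<subseteq> \<Union>\<F>)"

lemma finitely_covered_empty: "finitely_covered \<U> {}"
  unfolding finitely_covered_def by (intro exI[of _ "{}"]) simp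

lemma finitely_covered_subset: "K \<subseteq> U \<Longrightarrow> U \<in> \<U> \<Longrightarrow> finitely_covered \<U> K"
  unfolding finitely_covered_def by (intro exI[of _ "{U}"]) auto

lemma finitely_covered_mono: "finitely_covered \<U> K \<Longrightarrow> K' \<subseteq> K \<Longrightarrow> finitely_covered \<U> K'"
  unfolding finitely_covered_def by (meson order_trans)

lemma finitely_covered_Un:
  assumes "finitely_covered \<U> K" "finitely_covered \<U> K'"
  shows "finitely_covered \<U> (K \<union> K')"
proof -
  obtain \<F> \<F>' where "finite \<F>" "\<F> \<subseteq> \<U>" "K \<subseteq> \<Union>\<F>" "finite \<F>'" "\<F>' \<subseteq> \<U>" "K' \<subseteq> \<Union>\<F>'"
    using assms unfolding finitely_covered_def by (elim exE conjE)
  then show ?thesis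
    unfolding finitely_covered_def by (intro exI[of _ "\<F> \<union> \<F>'"]) auto
qed

lemma finitely_covered_UN:
  "finite A \<Longrightarrow> (\<And>a. a \<in> A \<Longrightarrow> finitely_covered \<U> (K a)) \<Longrightarrow> finitely_covered \<U> (\<Union>a\<in>A. K a)"
proof (induction A rule: finite_induct)
  case empty
  then show ?case by (simp add: finitely_covered_empty)
next
  case (insert a A)
  then show ?case by (simp add: finitely_covered_Un)
qed

lemma infinite_path_if_extendable:
  assumes "P []" "\<And>w. P w \<Longrightarrow> \<exists>a. P (w @ [a])"
  shows "\<exists>f. \<forall>n. P (map f [0..<n])"
proof -
  define grow where "grow w = w @ [SOME a. P (w @ [a])]" for w
  define ws where "ws n = (grow ^^ n) []" for n
  have ws_Suc: "ws (Suc n) = grow (ws n)" for n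
    by (simp add: ws_def)
  have P_ws: "P (ws n)" for n
  proof (induction n)
    case (Suc n)
    then show ?case using someI_ex[OF assms(2)[OF Suc]] by (simp add: ws_Suc grow_def)
  qed (simp add: ws_def assms(1))
  have len: "length (ws n) = n" for n
    by (induction n) (simp_all add: ws_def grow_def)
  have prefix: "take n (ws (n + k)) = ws n" for n k
    by (induction k) (simp_all add: ws_Suc grow_def len)
  define f where "f i = ws (Suc i) ! i" for i
  have "map f [0..<n] = ws n" for n
  proof (rule nth_equalityI)
    fix i assume "i < length (map f [0..<n])"
    then have "i < n" by simp
    then have "ws (Suc i) = take (Suc i) (ws n)"
      using prefix[of "Suc i" "n - Suc i"] by simp
    then show "map f [0..<n] ! i = ws n ! i" using \<open>i < n\<close> by (simp add: f_def)
  qed (simp add: len)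
  then show ?thesis using P_ws by metis
qed

lemma finitely_covered_cyl_diff_snocs:
  assumes "\<forall>U\<in>\<U>. openin shift_top U" "full_shift \<subseteq> \<Union>\<U>"
  shows "\<exists>A. finite A \<and> finitely_covered \<U> (cyl w {} - (\<Union>a\<in>A. cyl (w @ [a]) {}))"
proof (cases "finite (UNIV :: 'a::countable set)")
  case True
  then have "cyl w {} - (\<Union>a. cyl (w @ [a]) {}) = {}"
    by (simp only: Diff_eq_empty_iff cyl_subset_Union_snoc_if_finite_alphabet)
  then have "finitely_covered \<U> (cyl w {} - (\<Union>a. cyl (w @ [a]) {}))"
    by (simp only: finitely_covered_empty)
  then show ?thesis using True by blast
next
  case False
  then have "seq_of_word w \<in> full_shift"
    by (auto simp: full_shift_iff seq_of_word_def)
  then obtain U where "U \<in> \<U>" "seq_of_word w \<in> U" using assms(2) by blast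
  moreover have "openin shift_top U" using assms(1) \<open>U \<in> \<U>\<close> by blast
  ultimately obtain v G where "finite G" "seq_of_word w \<in> cyl v G" "cyl v G \<subseteq> U"
    unfolding openin_shift_top_iff by blast
  have "cyl w {} - (\<Union>a\<in>G. cyl (w @ [a]) {}) \<subseteq> U"
    using seq_of_word_neighbourhood[OF \<open>seq_of_word w \<in> cyl v G\<close>] \<open>cyl v G \<subseteq> U\<close>
    by (rule order_trans)
  then have "finitely_covered \<U> (cyl w {} - (\<Union>a\<in>G. cyl (w @ [a]) {}))"
    using \<open>U \<in> \<U>\<close> by (rule finitely_covered_subset)
  then show ?thesis using \<open>finite G\<close> by blast
qed

theorem compact_space_shift_top: "compact_space (shift_top :: 'a::countable seq topology)"
  unfolding compact_space_alt topspace_shift_top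
proof (intro allI impI)
  fix \<U> :: "'a seq set set"
  assume "(\<forall>U\<in>\<U>. openin shift_top U) \<and> full_shift \<subseteq> \<Union>\<U>"
  then have \<U>: "\<forall>U\<in>\<U>. openin shift_top U" "full_shift \<subseteq> \<Union>\<U>" by simp_all
  have extend: "\<exists>a. \<not> finitely_covered \<U> (cyl (w @ [a]) {})"
    if "\<not> finitely_covered \<U> (cyl w {})" for w
  proof (rule ccontr)
    assume "\<nexists>a. \<not> finitely_covered \<U> (cyl (w @ [a]) {})"
    moreover obtain A where "finite A" "finitely_covered \<U> (cyl w {} - (\<Union>a\<in>A. cyl (w @ [a]) {}))"
      using finitely_covered_cyl_diff_snocs[OF \<U>, of w] by (elim conjE exE)
    ultimately have "finitely_covered \<U> ((cyl w {} - (\<Union>a\<in>A. cyl (w @ [a]) {})) \<union>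
                                          (\<Union>a\<in>A. cyl (w @ [a]) {}))"
      using finitely_covered_UN[of A] finitely_covered_Un by metis
    then have "finitely_covered \<U> (cyl w {})"
      by (rule finitely_covered_mono) blast
    then show False using that by contradiction
  qed
  show "\<exists>\<F>. finite \<F> \<and> \<F> \<subseteq> \<U> \<and> full_shift \<subseteq> \<Union>\<F>"
  proof (rule ccontr)
    assume "\<not> ?thesis"
    then have "\<not> finitely_covered \<U> (cyl [] {})" by (simp add: finitely_covered_def cyl_Nil_empty)
    then obtain f where f: "\<forall>n. \<not> finitely_covered \<U> (cyl (map f [0..<n]) {})"
      using infinite_path_if_extendable[of "\<lambda>w. \<not> finitely_covered \<U> (cyl w {})"] extend by blast
    define z where "z i = Some (f i)" for i
    have "z \<in> full_shift" by (simp add: full_shift_iff z_def)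
    then obtain U where "U \<in> \<U>" "z \<in> U" using \<U>(2) by blast
    moreover have "openin shift_top U" using \<U>(1) \<open>U \<in> \<U>\<close> by blast
    ultimately obtain v G where "z \<in> cyl v G" and vG: "cyl v G \<subseteq> U"
      unfolding openin_shift_top_iff by blast
    have "cyl (map f [0..<Suc (length v)]) {} \<subseteq> cyl v G"
    proof
      fix y assume y: "y \<in> cyl (map f [0..<Suc (length v)]) {}"
      have "y i = z i" if "i \<le> length v" for i
        using y that by (simp add: cyl_def z_def del: upt_Suc)
      moreover have "y \<in> full_shift" using y by (simp add: cyl_def)
      ultimately show "y \<in> cyl v G" using cyl_if_agrees[OF \<open>z \<in> cyl v G\<close>] by blast
    qed
    then have "cyl (map f [0..<Suc (length v)]) {} \<subseteq> U" using vG by (rule order_trans)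
    then have "finitely_covered \<U> (cyl (map f [0..<Suc (length v)]) {})"
      using \<open>U \<in> \<U>\<close> by (rule finitely_covered_subset)
    then show False using f by blast
  qed
qed

lemma finite_nonempty_of_open_partition:
  assumes "compact_space X" "\<And>a. openin X (C a)" "\<And>a b. a \<noteq> b \<Longrightarrow> C a \<inter> C b = {}"
    "topspace X \<subseteq> (\<Union>a. C a)"
  shows "finite {a. C a \<noteq> {}}"
proof -
  have "compactin X (topspace X)" using assms(1) by (simp add: compact_space_def)
  moreover have "openin X U" if "U \<in> range C" for U using that assms(2) by blast
  ultimately obtain \<F> where \<F>: "finite \<F>" "\<F> \<subseteq> range C" "topspace X \<subseteq> \<Union>\<F>"
    using compactinD[where \<U> = "range C"] assms(4) by meson
  obtain A where A: "finite A" "\<F> = C ` A"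
    using finite_subset_image[OF \<F>(1,2)] by blast
  have "a \<in> A" if nonempty: "C a \<noteq> {}" for a
  proof (rule ccontr)
    assume "a \<notin> A"
    obtain x where x: "x \<in> C a" using nonempty by blast
    then have "x \<in> topspace X" using openin_subset[OF assms(2)] by blast
    then obtain b where "b \<in> A" "x \<in> C b" using \<F>(3) A(2) by blast
    moreover have "C a \<inter> C b = {}" using assms(3) \<open>a \<notin> A\<close> \<open>b \<in> A\<close> by metis
    ultimately show False using x by blast
  qed
  then have "{a. C a \<noteq> {}} \<subseteq> A" by blast
  then show ?thesis using A(1) by (rule finite_subset)
qed

lemma closedin_eq_finite_Union_of_base:
  assumes "compact_space X" "closedin X S" "\<And>V. V \<in> \<B> \<Longrightarrow> openin X V"
    "\<And>x. x \<in> S \<Longrightarrow> \<exists>V\<in>\<B>. x \<in> V \<and> V \<subseteq> S"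
  shows "\<exists>\<G>. finite \<G> \<and> \<G> \<subseteq> \<B> \<and> S = \<Union>\<G>"
proof -
  have "compactin X S" using assms(1,2) by (rule closedin_compact_space)
  moreover have "S \<subseteq> \<Union>{V \<in> \<B>. V \<subseteq> S}" using assms(4) by blast
  ultimately obtain \<G> where "finite \<G>" "\<G> \<subseteq> {V \<in> \<B>. V \<subseteq> S}" "S \<subseteq> \<Union>\<G>"
    using compactinD[of X S "{V \<in> \<B>. V \<subseteq> S}"] assms(3) by blast
  then show ?thesis by blast
qed

section \<open>Sets determined by a bounded prefix\<close>

definition determined_by_prefix :: "'a seq set \<Rightarrow> 'a seq set \<Rightarrow> nat \<Rightarrow> bool" where
  "determined_by_prefix L C N \<longleftrightarrow>
     (\<forall>x\<in>L. \<forall>y\<in>L. prefix_word x N = prefix_word y N \<longrightarrow> x \<in> C \<longrightarrow> y \<in> C)"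

lemma determined_by_prefix_mono:
  "determined_by_prefix L C N \<Longrightarrow> N \<le> M \<Longrightarrow> determined_by_prefix L C M"
  unfolding determined_by_prefix_def prefix_word_eq_iff by (meson less_le_trans)

lemma determined_by_prefix_Diff:
  "determined_by_prefix L C N \<Longrightarrow> determined_by_prefix L (L - C) N"
  unfolding determined_by_prefix_def by (metis Diff_iff)

lemma determined_by_prefix_cyl:
  assumes "L \<subseteq> full_shift"
  shows "determined_by_prefix L (cyl w F \<inter> L) (Suc (length w))"
  unfolding determined_by_prefix_def prefix_word_eq_iff
proof (intro ballI impI)
  fix x y assume "x \<in> L" "y \<in> L" "\<forall>i<Suc (length w). x i = y i" "x \<in> cyl w F \<inter> L"
  moreover have "y \<in> full_shift" using assms \<open>y \<in> L\<close> by blast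
  ultimately show "y \<in> cyl w F \<inter> L"
    using cyl_if_agrees[of x w F y] by (simp add: less_Suc_eq_le)
qed

lemma determined_by_prefix_Un:
  "determined_by_prefix L A N \<Longrightarrow> determined_by_prefix L B N \<Longrightarrow> determined_by_prefix L (A \<union> B) N"
  unfolding determined_by_prefix_def by blast

lemma determined_by_prefix_finite_Union:
  assumes "L \<subseteq> full_shift" "finite G" "G \<subseteq> {Z \<inter> L | Z. Z \<in> gen_cylinders}"
  shows "\<exists>N. determined_by_prefix L (\<Union>G) N"
  using assms(2,3)
proof (induction G rule: finite_induct)
  case empty
  then show ?case by (simp add: determined_by_prefix_def)
next
  case (insert g G)
  then obtain N where N: "determined_by_prefix L (\<Union>G) N" by blast
  obtain w F where g: "g = cyl w F \<inter> L"
    using insert.prems by (auto simp: gen_cylinders_eq)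
  have "determined_by_prefix L g (max N (Suc (length w)))"
    unfolding g by (rule determined_by_prefix_mono[OF determined_by_prefix_cyl[OF assms(1)]]) simp
  moreover have "determined_by_prefix L (\<Union>G) (max N (Suc (length w)))"
    by (rule determined_by_prefix_mono[OF N]) simp
  ultimately show ?case
    using determined_by_prefix_Un by (metis Union_insert)
qed

lemma prefix_word_in_blocks: "x \<in> full_shift \<Longrightarrow> prefix_word x N \<in> blocks full_shift"
  unfolding blocks_def prefix_word_def by (auto intro!: bexI[of _ x] exI[of _ 0])

lemma finitely_defined_if_determined_by_prefix:
  fixes L :: "'a::countable seq set"
  assumes L: "L \<subseteq> full_shift" and C: "C \<subseteq> L" and det: "determined_by_prefix L C N"
  shows "finitely_defined L C"
proof -
  \<comment> \<open>the prefixes of length \<open>1 + N\<close> are indexed by their codes under \<open>to_nat\<close>\<close>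
  define I where "I (S :: 'a seq set) = to_nat ` (\<lambda>x. prefix_word x (1 + N)) ` S" for S
  have enum: "S = {x \<in> L. \<exists>i\<in>I S. prefix_word x (1 + N) = from_nat i}"
    if S: "S \<subseteq> L" "determined_by_prefix L S (1 + N)" for S
  proof (intro equalityI subsetI CollectI conjI)
    fix x assume "x \<in> S"
    then show "x \<in> L" "\<exists>i\<in>I S. prefix_word x (1 + N) = from_nat i"
      using S(1) unfolding I_def by auto
  next
    fix x assume "x \<in> {x \<in> L. \<exists>i\<in>I S. prefix_word x (1 + N) = from_nat i}"
    then obtain y where "x \<in> L" "y \<in> S" "prefix_word y (1 + N) = prefix_word x (1 + N)"
      unfolding I_def by auto
    then show "x \<in> S" using S unfolding determined_by_prefix_def by blast
  qed
  have blocks: "\<forall>i\<in>I S. from_nat i \<in> blocks (full_shift :: 'a seq set)" if "S \<subseteq> L" for S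
    using that L prefix_word_in_blocks unfolding I_def by auto
  have "determined_by_prefix L C (1 + N)"
    using determined_by_prefix_mono[OF det] by simp
  then have "C = {x \<in> L. \<exists>i\<in>I C. prefix_word x (1 + N) = from_nat i}"
    "L - C = {x \<in> L. \<exists>i\<in>I (L - C). prefix_word x (1 + N) = from_nat i}"
    using enum[of C] enum[of "L - C"] C determined_by_prefix_Diff by blast+
  with blocks C show ?thesis
    unfolding finitely_defined_def
    by (intro conjI exI[of _ "I C"] exI[of _ "I (L - C)"] exI[of _ "\<lambda>_. N"] exI[of _ from_nat])
      auto
qed

lemma finitely_definedE:
  assumes "finitely_defined L C"
  obtains I l b where "C = {x \<in> L. \<exists>i\<in>(I :: nat set). prefix_word x (1 + l i) = b i}"
  using assms unfolding finitely_defined_def by auto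

lemma sliding_block_codeD:
  assumes "sliding_block_code L C Phi"
  shows "a \<noteq> b \<Longrightarrow> C a \<inter> C b = {}" "(\<Union>a. C a) = L"
    "x \<in> L \<Longrightarrow> Phi x n = (THE a. (shift ^^ n) x \<in> C a)"
  using assms unfolding sliding_block_code_def by simp_all

lemma sliding_block_code_mem_iff:
  assumes sbc: "sliding_block_code L C Phi" and L: "shift ` L \<subseteq> L" and x: "x \<in> L"
  shows "(shift ^^ n) x \<in> C a \<longleftrightarrow> Phi x n = a"
proof -
  have "(shift ^^ n) x \<in> (\<Union>a. C a)"
    using funpow_shift_in[OF L x] sliding_block_codeD(2)[OF sbc] by simp
  then obtain b where b: "(shift ^^ n) x \<in> C b" by blast
  have unique: "c = b" if "(shift ^^ n) x \<in> C c" for c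
  proof (rule ccontr)
    assume "c \<noteq> b"
    then have "C c \<inter> C b = {}" by (rule sliding_block_codeD(1)[OF sbc])
    then show False using that b by blast
  qed
  have "Phi x n = (THE c. (shift ^^ n) x \<in> C c)"
    using sliding_block_codeD(3)[OF sbc x] .
  also have "\<dots> = b" using b unique by (rule the_equality)
  finally show ?thesis using b unique by blast
qed

lemma letters_mem: "x \<in> L \<Longrightarrow> x i = Some a \<Longrightarrow> a \<in> letters L"
  unfolding letters_def blocks_def by (auto intro!: bexI[of _ x] exI[of _ i])

lemma cyl_Nil_letters_Int_eq_empty:
  assumes "L \<subseteq> full_shift" "empty_seq \<notin> L"
  shows "cyl [] (letters L) \<inter> L = {}"
proof -
  have "x \<notin> L" if x: "x \<in> cyl [] (letters L)" for x
  proof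
    assume "x \<in> L"
    show False
    proof (cases "x 0")
      case None
      then have "x = empty_seq" using funpow_shift_eq_empty_seq[of x 0] x by (simp add: cyl_def)
      then show False using assms(2) \<open>x \<in> L\<close> by simp
    next
      case (Some a)
      then show False using x letters_mem[OF \<open>x \<in> L\<close>, of 0 a] by (simp add: cyl_def)
    qed
  qed
  then show ?thesis by blast
qed

locale shift_space_map =
  fixes Lam :: "'a::countable seq set" and Gam :: "'b::countable seq set"
    and Phi :: "'a seq \<Rightarrow> 'b seq" and d :: 'b
  assumes shift_space_Lam: "shift_space Lam" and shift_space_Gam: "shift_space Gam"
    and Phi_into: "Phi ` Lam \<subseteq> Gam"
    and Phi_empty_seq: "Phi empty_seq = (\<lambda>_. Some d)"
begin

lemma Lam_subset: "Lam \<subseteq> full_shift"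
  using shift_space_Lam by (simp add: shift_space_def)

lemma shift_Lam: "shift ` Lam \<subseteq> Lam"
  using shift_space_Lam by (simp add: shift_space_def)

lemma Phi_in_full_shift: "x \<in> Lam \<Longrightarrow> Phi x \<in> full_shift"
  using Phi_into shift_space_Gam by (auto simp: shift_space_def)

lemma topspace_Lam: "topspace (subtopology shift_top Lam) = Lam"
  using Lam_subset by (simp add: topspace_shift_top Int_absorb1)

lemma compact_space_Lam: "compact_space (subtopology shift_top Lam)"
proof (rule compact_space_subtopology)
  show "compactin shift_top Lam"
    using shift_space_Lam compact_space_shift_top closedin_compact_space
    unfolding shift_space_def by blast
qed

lemma coordinate_funpow_shift:
  assumes "\<forall>x\<in>Lam. Phi (shift x) = shift (Phi x)" "x \<in> Lam"
  shows "Phi ((shift ^^ n) x) j = Phi x (n + j)"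
proof -
  have "Phi ((shift ^^ n) x) j = (shift ^^ n) (Phi x) j"
    using funpow_shift_commute[OF assms(1) shift_Lam assms(2)] by simp
  also have "\<dots> = Phi x (n + j)" by (rule funpow_shift_apply)
  finally show ?thesis .
qed

lemma clopen_finite_Union_cylinders:
  assumes "finite G" "G \<subseteq> {Z \<inter> Lam | Z. Z \<in> gen_cylinders}"
  shows "openin (subtopology shift_top Lam) (\<Union>G) \<and> closedin (subtopology shift_top Lam) (\<Union>G)"
proof -
  have "openin (subtopology shift_top Lam) g \<and> closedin (subtopology shift_top Lam) g"
    if g: "g \<in> G" for g
  proof -
    obtain w F where g_eq: "g = cyl w F \<inter> Lam" "finite F"
      using g assms(2) by (auto simp: gen_cylinders_eq)
    have "openin (subtopology shift_top Lam) (cyl w F \<inter> Lam)"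
      using openin_subtopology_Int[OF openin_cyl[OF g_eq(2)]] .
    moreover have "closedin (subtopology shift_top Lam) (Lam \<inter> cyl w F)"
      using closedin_subtopology_Int_closed[OF closedin_cyl] .
    ultimately show ?thesis unfolding g_eq(1) by (simp add: Int_commute)
  qed
  then show ?thesis using assms(1) by (auto intro: closedin_Union)
qed

lemma Phi_after_empty_letter:
  assumes "\<forall>x\<in>Lam. Phi (shift x) = shift (Phi x)" "x \<in> Lam" "x m = None"
  shows "Phi x (m + j) = Some d"
proof -
  have "(shift ^^ m) x = empty_seq"
    using funpow_shift_eq_empty_seq Lam_subset assms(2,3) by blast
  then show ?thesis
    using coordinate_funpow_shift[OF assms(1,2), of m j] Phi_empty_seq by simp
qed

definition symbol_class :: "'b option \<Rightarrow> 'a seq set" where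
  "symbol_class a = {x \<in> Lam. Phi x 0 = a}"

subsection \<open>Continuous shift-commuting maps are sliding block codes\<close>

context
  assumes continuous: "continuous_map (subtopology shift_top Lam) (subtopology shift_top Gam) Phi"
    and commutes: "\<forall>x\<in>Lam. Phi (shift x) = shift (Phi x)"
    and kernel_finitely_defined:
      "empty_seq \<in> Gam \<Longrightarrow> finitely_defined Lam {x \<in> Lam. Phi x = empty_seq}"
begin

lemma mem_symbol_class_iff: "x \<in> Lam \<Longrightarrow> (shift ^^ n) x \<in> symbol_class a \<longleftrightarrow> Phi x n = a"
  using coordinate_funpow_shift[OF commutes, of x n 0] funpow_shift_in[OF shift_Lam]
  by (simp add: symbol_class_def)

lemma symbol_class_None: "symbol_class None = {x \<in> Lam. Phi x = empty_seq}"
proof (intro equalityI subsetI)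
  fix x assume "x \<in> symbol_class None"
  then have "x \<in> Lam" "Phi x 0 = None" by (simp_all add: symbol_class_def)
  then show "x \<in> {x \<in> Lam. Phi x = empty_seq}"
    using funpow_shift_eq_empty_seq[OF Phi_in_full_shift, of x 0] by simp
qed (simp add: symbol_class_def empty_seq_def)

lemma not_None_if_Phi_eq_empty_seq:
  assumes "x \<in> Lam" "Phi x = empty_seq"
  shows "x i \<noteq> None"
  using Phi_after_empty_letter[OF commutes assms(1), of i 0] assms(2) by (auto simp: empty_seq_def)

lemma openin_symbol_class_None: "openin (subtopology shift_top Lam) (symbol_class None)"
proof (cases "empty_seq \<in> Gam")
  case False
  then have "symbol_class None = {}"
    using Phi_into by (auto simp: symbol_class_None)
  then show ?thesis by simp
next
  case True
  obtain I l b where I: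
    "{x \<in> Lam. Phi x = empty_seq} = {x \<in> Lam. \<exists>i\<in>(I :: nat set). prefix_word x (1 + l i) = b i}"
    by (rule finitely_definedE[OF kernel_finitely_defined[OF True]])
  show ?thesis
    unfolding openin_subtopology_shift_top_iff
  proof (intro conjI ballI)
    fix x assume "x \<in> symbol_class None"
    then have x: "x \<in> Lam" "Phi x = empty_seq" by (simp_all add: symbol_class_None)
    then obtain i where i: "i \<in> I" "prefix_word x (1 + l i) = b i" using I by blast
    define w where "w = map (the \<circ> x) [0..<1 + l i]"
    have x_letters: "\<forall>j<1 + l i. x j \<noteq> None" using not_None_if_Phi_eq_empty_seq[OF x] by blast
    have "x \<in> cyl w {}" unfolding w_def using mem_cyl_prefix Lam_subset x(1) x_letters by blast
    moreover have "cyl w {} \<inter> Lam \<subseteq> symbol_class None"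
    proof
      fix y assume y: "y \<in> cyl w {} \<inter> Lam"
      then have "prefix_word y (1 + l i) = prefix_word x (1 + l i)"
        using prefix_word_eq_if_mem_cyl_prefix x_letters unfolding w_def by blast
      then have "prefix_word y (1 + l i) = b i" using i(2) by simp
      then show "y \<in> symbol_class None" using y i(1) I by (auto simp: symbol_class_None)
    qed
    ultimately show "\<exists>w F. finite F \<and> x \<in> cyl w F \<and> cyl w F \<inter> Lam \<subseteq> symbol_class None"
      by blast
  qed (auto simp: symbol_class_def)
qed

lemma openin_symbol_class: "openin (subtopology shift_top Lam) (symbol_class a)"
proof (cases a)
  case None
  then show ?thesis using openin_symbol_class_None by simp
next
  case (Some b)
  have "openin (subtopology shift_top Gam) (Gam \<inter> cyl [b] {})"
    by (rule openin_subtopology_Int2[OF openin_cyl]) simp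
  then have "openin (subtopology shift_top Lam) {x \<in> Lam. Phi x \<in> Gam \<inter> cyl [b] {}}"
    by (rule openin_continuous_map_preimage[OF continuous, unfolded topspace_Lam])
  moreover have "{x \<in> Lam. Phi x \<in> Gam \<inter> cyl [b] {}} = symbol_class a"
    using Phi_into Phi_in_full_shift Some by (auto simp: symbol_class_def cyl_def)
  ultimately show ?thesis by simp
qed

lemma closedin_symbol_class: "closedin (subtopology shift_top Lam) (symbol_class a)"
proof -
  have "Lam - symbol_class a = (\<Union>b\<in>- {a}. symbol_class b)"
    by (auto simp: symbol_class_def)
  then have "openin (subtopology shift_top Lam) (Lam - symbol_class a)"
    using openin_symbol_class by auto
  moreover have "symbol_class a \<subseteq> Lam" by (auto simp: symbol_class_def)
  ultimately show ?thesis
    unfolding closedin_def topspace_Lam by blast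
qed

lemma symbol_class_finite_Union_cylinders:
  "\<exists>G. finite G \<and> G \<subseteq> {Z \<inter> Lam | Z. Z \<in> gen_cylinders} \<and> symbol_class a = \<Union>G"
proof (rule closedin_eq_finite_Union_of_base[OF compact_space_Lam closedin_symbol_class])
  fix V assume "V \<in> {Z \<inter> Lam | Z. Z \<in> gen_cylinders}"
  then show "openin (subtopology shift_top Lam) V"
    by (auto simp: gen_cylinders_eq intro: openin_subtopology_Int openin_cyl)
next
  fix x assume "x \<in> symbol_class a"
  then obtain w F where "finite F" "x \<in> cyl w F" "cyl w F \<inter> Lam \<subseteq> symbol_class a"
    using openin_symbol_class[of a] unfolding openin_subtopology_shift_top_iff by blast
  moreover have "x \<in> Lam" using \<open>x \<in> symbol_class a\<close> by (simp add: symbol_class_def)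
  ultimately show "\<exists>V\<in>{Z \<inter> Lam | Z. Z \<in> gen_cylinders}. x \<in> V \<and> V \<subseteq> symbol_class a"
    by (auto simp: gen_cylinders_eq)
qed

lemma finitely_defined_symbol_class: "finitely_defined Lam (symbol_class a)"
proof -
  obtain G where "finite G" "G \<subseteq> {Z \<inter> Lam | Z. Z \<in> gen_cylinders}" "symbol_class a = \<Union>G"
    using symbol_class_finite_Union_cylinders[of a] by (elim exE conjE)
  then obtain N where "determined_by_prefix Lam (symbol_class a) N"
    using determined_by_prefix_finite_Union[OF Lam_subset] by presburger
  moreover have "symbol_class a \<subseteq> Lam" by (auto simp: symbol_class_def)
  ultimately show ?thesis
    using finitely_defined_if_determined_by_prefix[OF Lam_subset] by blast
qed

lemma sliding_block_code_symbol_class: "sliding_block_code Lam symbol_class Phi"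
proof -
  have "symbol_class a \<inter> symbol_class b = {}" if "a \<noteq> b" for a b
    using that by (auto simp: symbol_class_def)
  moreover have "(\<Union>a. symbol_class a) = Lam"
    by (auto simp: symbol_class_def)
  moreover have "shift ` symbol_class None \<subseteq> symbol_class None"
    using commutes shift_Lam by (auto simp: symbol_class_None shift_def empty_seq_def)
  moreover have "Phi x n = (THE a. (shift ^^ n) x \<in> symbol_class a)" if "x \<in> Lam" for x n
    using that by (simp add: mem_symbol_class_iff)
  ultimately show ?thesis
    unfolding sliding_block_code_def using finitely_defined_symbol_class by blast
qed

lemma symbol_class_eq_empty_if_not_letter:
  assumes "a \<notin> letters Gam"
  shows "symbol_class (Some a) = {}"
proof -
  have "a \<in> letters Gam" if "x \<in> symbol_class (Some a)" for x
  proof -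
    have "x \<in> Lam" "Phi x 0 = Some a" using that by (simp_all add: symbol_class_def)
    then show ?thesis using Phi_into letters_mem[of "Phi x" Gam 0 a] by blast
  qed
  then show ?thesis using assms by blast
qed

lemma finite_nonempty_symbol_classes: "finite {a \<in> letters Gam. symbol_class (Some a) \<noteq> {}}"
proof -
  have "finite {a. symbol_class a \<noteq> {}}"
  proof (rule finite_nonempty_of_open_partition[OF compact_space_Lam openin_symbol_class])
    show "symbol_class a \<inter> symbol_class b = {}" if "a \<noteq> b" for a b
      using that by (auto simp: symbol_class_def)
    show "topspace (subtopology shift_top Lam) \<subseteq> (\<Union>a. symbol_class a)"
      unfolding topspace_Lam by (auto simp: symbol_class_def)
  qed
  then have "finite (the ` {a. symbol_class a \<noteq> {}})" by (rule finite_imageI)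
  moreover have "{a \<in> letters Gam. symbol_class (Some a) \<noteq> {}} \<subseteq> the ` {a. symbol_class a \<noteq> {}}"
  proof
    fix a assume "a \<in> {a \<in> letters Gam. symbol_class (Some a) \<noteq> {}}"
    then show "a \<in> the ` {a. symbol_class a \<noteq> {}}"
      by (intro image_eqI[where x = "Some a"]) simp_all
  qed
  ultimately show ?thesis by (rule finite_subset[rotated])
qed

lemma symbol_class_near_empty_seq:
  "\<exists>F. finite F \<and> F \<subseteq> letters Lam \<and>
     (\<forall>n. 1 \<le> n \<and> n \<le> M \<longrightarrow> (shift ^^ (n - 1)) ` (gen_cyl empty_seq F \<inter> Lam) \<subseteq> symbol_class (Some d))"
proof (cases "empty_seq \<in> Lam")
  case True
  have "openin (subtopology shift_top Gam) (Gam \<inter> cyl (replicate M d) {})"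
    by (rule openin_subtopology_Int2[OF openin_cyl]) simp
  then have U: "openin (subtopology shift_top Lam) {x \<in> Lam. Phi x \<in> Gam \<inter> cyl (replicate M d) {}}"
    by (rule openin_continuous_map_preimage[OF continuous, unfolded topspace_Lam])
  have "empty_seq \<in> {x \<in> Lam. Phi x \<in> Gam \<inter> cyl (replicate M d) {}}"
    using True Phi_into Phi_in_full_shift[OF True] by (auto simp: Phi_empty_seq cyl_def)
  then obtain w F where wF: "finite F" "empty_seq \<in> cyl w F"
    "cyl w F \<inter> Lam \<subseteq> {x \<in> Lam. Phi x \<in> Gam \<inter> cyl (replicate M d) {}}"
    using U unfolding openin_subtopology_shift_top_iff by blast
  have "w = []" using wF(2) by (cases w) (auto simp: cyl_def empty_seq_def)
  show ?thesis
  proof (intro exI[of _ "F \<inter> letters Lam"] conjI allI impI)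
    fix n assume n: "1 \<le> n \<and> n \<le> M"
    show "(shift ^^ (n - 1)) ` (gen_cyl empty_seq (F \<inter> letters Lam) \<inter> Lam) \<subseteq> symbol_class (Some d)"
    proof
      fix y assume "y \<in> (shift ^^ (n - 1)) ` (gen_cyl empty_seq (F \<inter> letters Lam) \<inter> Lam)"
      then obtain x where x: "x \<in> cyl [] (F \<inter> letters Lam)" "x \<in> Lam" "y = (shift ^^ (n - 1)) x"
        by (auto simp: gen_cyl_empty_seq)
      have "x 0 \<notin> Some ` F"
        using x(1,2) letters_mem[OF x(2), of 0] by (auto simp: cyl_def)
      then have "x \<in> cyl w F" using x(1) \<open>w = []\<close> by (simp add: cyl_def)
      then have "Phi x (n - 1) = Some d"
        using wF(3) x(2) n by (auto simp: cyl_def)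
      then show "y \<in> symbol_class (Some d)" using mem_symbol_class_iff x(2,3) by simp
    qed
  qed (use wF(1) in auto)
next
  case False
  then have "finite (letters Lam)" using shift_space_Lam by (simp add: shift_space_def)
  moreover have "gen_cyl empty_seq (letters Lam) \<inter> Lam = {}"
    using cyl_Nil_letters_Int_eq_empty[OF Lam_subset False] by (simp add: gen_cyl_empty_seq)
  ultimately show ?thesis by (intro exI[of _ "letters Lam"]) auto
qed

end

subsection \<open>Sliding block codes with properties (1) and (2) are continuous\<close>

context
  fixes C :: "'b option \<Rightarrow> 'a seq set"
  assumes sliding: "sliding_block_code Lam C Phi"
    and C_empty: "\<forall>a. a \<notin> letters Gam \<longrightarrow> C (Some a) = {}"
    and C_cylinders: "\<forall>a \<in> letters Gam. \<exists>G. finite G \<and>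
                        G \<subseteq> {Z \<inter> Lam | Z. Z \<in> gen_cylinders} \<and> C (Some a) = \<Union>G"
    and C_near_empty_seq: "\<forall>M::nat. M \<ge> 1 \<longrightarrow> (\<exists>F. finite F \<and> F \<subseteq> letters Lam \<and>
                 (\<forall>n. 1 \<le> n \<and> n \<le> M \<longrightarrow>
                    (shift ^^ (n - 1)) ` (gen_cyl empty_seq F \<inter> Lam) \<subseteq> C (Some d)))"
begin

lemma mem_C_iff: "x \<in> Lam \<Longrightarrow> (shift ^^ n) x \<in> C a \<longleftrightarrow> Phi x n = a"
  by (rule sliding_block_code_mem_iff[OF sliding shift_Lam])

lemma commutes_if_sliding_block_code: "\<forall>x\<in>Lam. Phi (shift x) = shift (Phi x)"
proof
  fix x assume x: "x \<in> Lam"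
  then have "shift x \<in> Lam" using shift_Lam by blast
  show "Phi (shift x) = shift (Phi x)"
  proof
    fix n
    have "(shift ^^ Suc n) x \<in> C (Phi x (Suc n))" using mem_C_iff[OF x] by blast
    moreover have "(shift ^^ n) (shift x) = (shift ^^ Suc n) x"
      by (simp only: funpow_Suc_right o_apply)
    ultimately have "(shift ^^ n) (shift x) \<in> C (Phi x (Suc n))" by simp
    then show "Phi (shift x) n = shift (Phi x) n"
      using mem_C_iff[OF \<open>shift x \<in> Lam\<close>] by (simp add: shift_def)
  qed
qed

lemma clopen_C_Some:
  "openin (subtopology shift_top Lam) (C (Some a)) \<and> closedin (subtopology shift_top Lam) (C (Some a))"
proof (cases "a \<in> letters Gam")
  case True
  obtain G where "finite G" "G \<subseteq> {Z \<inter> Lam | Z. Z \<in> gen_cylinders}" "C (Some a) = \<Union>G"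
    using bspec[OF C_cylinders True] by (elim exE conjE)
  then show ?thesis using clopen_finite_Union_cylinders by simp
next
  case False
  then show ?thesis using C_empty by simp
qed

lemma Phi_eq_d_near_empty_seq: "\<exists>F. finite F \<and> (\<forall>y\<in>cyl [] F \<inter> Lam. \<forall>j<M. Phi y j = Some d)"
proof -
  have "\<exists>F. finite F \<and> F \<subseteq> letters Lam \<and> (\<forall>n. 1 \<le> n \<and> n \<le> Suc M \<longrightarrow>
          (shift ^^ (n - 1)) ` (gen_cyl empty_seq F \<inter> Lam) \<subseteq> C (Some d))"
    using C_near_empty_seq by simp
  then obtain F where F: "finite F" "F \<subseteq> letters Lam"
    "\<forall>n. 1 \<le> n \<and> n \<le> Suc M \<longrightarrow> (shift ^^ (n - 1)) ` (gen_cyl empty_seq F \<inter> Lam) \<subseteq> C (Some d)"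
    by (elim exE conjE)
  show ?thesis
  proof (intro exI[of _ F] conjI ballI allI impI)
    fix y j assume y: "y \<in> cyl [] F \<inter> Lam" and "j < M"
    then have "(shift ^^ j) y \<in> C (Some d)"
      using F(3)[rule_format, of "Suc j"] by (auto simp: gen_cyl_empty_seq)
    then show "Phi y j = Some d" using mem_C_iff y by blast
  qed (rule F(1))
qed

lemma coordinate_nbhd_if_no_empty_letter:
  assumes T: "openin (subtopology shift_top Lam) {y \<in> Lam. Phi y 0 \<in> T}"
    and x: "x \<in> Lam" "Phi x i \<in> T" "\<forall>j<i. x j \<noteq> None"
  shows "\<exists>U. openin (subtopology shift_top Lam) U \<and> x \<in> U \<and> U \<subseteq> {y \<in> Lam. Phi y i \<in> T}"
proof -
  note coord = coordinate_funpow_shift[OF commutes_if_sliding_block_code]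
  have "(shift ^^ i) x \<in> {y \<in> Lam. Phi y 0 \<in> T}"
    using x coord[OF x(1), of i 0] funpow_shift_in[OF shift_Lam x(1)] by simp
  then obtain U where U: "openin (subtopology shift_top Lam) U" "x \<in> U"
    "(shift ^^ i) ` U \<subseteq> {y \<in> Lam. Phi y 0 \<in> T}"
    using funpow_shift_continuous_at[OF Lam_subset shift_Lam T x(1) _ x(3)] by blast
  have "U \<subseteq> {y \<in> Lam. Phi y i \<in> T}"
  proof
    fix y assume "y \<in> U"
    then have "y \<in> Lam" using openin_imp_subset[OF U(1)] by blast
    then show "y \<in> {y \<in> Lam. Phi y i \<in> T}"
      using U(3) \<open>y \<in> U\<close> coord[of y i 0] by auto
  qed
  then show ?thesis using U(1,2) by blast
qed

lemma coordinate_nbhd_if_empty_letter: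
  assumes x: "x \<in> Lam" "Phi x i \<in> T" "x m = None" "\<forall>j<m. x j \<noteq> None" "m < i"
  shows "\<exists>U. openin (subtopology shift_top Lam) U \<and> x \<in> U \<and> U \<subseteq> {y \<in> Lam. Phi y i \<in> T}"
proof -
  note coord = coordinate_funpow_shift[OF commutes_if_sliding_block_code]
  have "Some d \<in> T"
    using Phi_after_empty_letter[OF commutes_if_sliding_block_code x(1) x(3), of "i - m"] x(2,5)
    by simp
  obtain F where F: "finite F" "\<forall>y\<in>cyl [] F \<inter> Lam. \<forall>j<Suc i. Phi y j = Some d"
    using Phi_eq_d_near_empty_seq by blast
  have D: "openin (subtopology shift_top Lam) (cyl [] F \<inter> Lam)"
    using openin_subtopology_Int[OF openin_cyl[OF F(1)]] .
  have "(shift ^^ m) x \<in> cyl [] F \<inter> Lam"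
    using funpow_shift_in_full_shift Lam_subset x(1,3) funpow_shift_in[OF shift_Lam x(1)]
    by (auto simp: cyl_def funpow_shift_apply)
  then obtain U where U: "openin (subtopology shift_top Lam) U" "x \<in> U"
    "(shift ^^ m) ` U \<subseteq> cyl [] F \<inter> Lam"
    using funpow_shift_continuous_at[OF Lam_subset shift_Lam D x(1) _ x(4)] by blast
  have "U \<subseteq> {y \<in> Lam. Phi y i \<in> T}"
  proof
    fix y assume "y \<in> U"
    then have "y \<in> Lam" using openin_imp_subset[OF U(1)] by blast
    have "(shift ^^ m) y \<in> cyl [] F \<inter> Lam" using U(3) \<open>y \<in> U\<close> by blast
    then have "Phi ((shift ^^ m) y) (i - m) = Some d"
      using F(2) by simp
    then have "Phi y i = Some d" using coord[OF \<open>y \<in> Lam\<close>, of m "i - m"] x(5) by simp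
    then show "y \<in> {y \<in> Lam. Phi y i \<in> T}" using \<open>y \<in> Lam\<close> \<open>Some d \<in> T\<close> by simp
  qed
  then show ?thesis using U(1,2) by blast
qed

lemma openin_coordinate_preimage:
  assumes "openin (subtopology shift_top Lam) {y \<in> Lam. Phi y 0 \<in> T}"
  shows "openin (subtopology shift_top Lam) {y \<in> Lam. Phi y i \<in> T}"
proof (subst openin_subopen, intro ballI)
  fix x assume "x \<in> {y \<in> Lam. Phi y i \<in> T}"
  then have x: "x \<in> Lam" "Phi x i \<in> T" by simp_all
  show "\<exists>U. openin (subtopology shift_top Lam) U \<and> x \<in> U \<and> U \<subseteq> {y \<in> Lam. Phi y i \<in> T}"
  proof (cases "\<forall>j<i. x j \<noteq> None")
    case True
    then show ?thesis using coordinate_nbhd_if_no_empty_letter[OF assms x] by blast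
  next
    case False
    then obtain m where "x m = None" "\<forall>j<m. x j \<noteq> None" "m < i"
      using exists_least_iff[of "\<lambda>m. x m = None"] by (metis leI le_less_trans)
    then show ?thesis using coordinate_nbhd_if_empty_letter[OF x] by blast
  qed
qed

lemma continuous_if_sliding_block_code:
  "continuous_map (subtopology shift_top Lam) (subtopology shift_top Gam) Phi"
proof -
  have "continuous_map (subtopology shift_top Lam) shift_top Phi"
  proof (rule continuous_map_into_shift_top, unfold topspace_Lam)
    show "Phi ` Lam \<subseteq> full_shift" using Phi_in_full_shift by blast
  next
    fix i a
    have "{y \<in> Lam. Phi y 0 \<in> {Some a}} = C (Some a)"
      using mem_C_iff[of _ 0] sliding_block_codeD(2)[OF sliding] by auto
    then have "openin (subtopology shift_top Lam) {y \<in> Lam. Phi y 0 \<in> {Some a}}"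
      using clopen_C_Some by simp
    then have "openin (subtopology shift_top Lam) {y \<in> Lam. Phi y i \<in> {Some a}}"
      by (rule openin_coordinate_preimage)
    then show "openin (subtopology shift_top Lam) {x \<in> Lam. Phi x i = Some a}" by simp
  next
    fix i and H :: "'b set" assume "finite H"
    have "{y \<in> Lam. Phi y 0 \<in> - Some ` H} = Lam - (\<Union>h\<in>H. C (Some h))"
      using mem_C_iff[of _ 0] sliding_block_codeD(2)[OF sliding] by auto
    moreover have "closedin (subtopology shift_top Lam) (\<Union>h\<in>H. C (Some h))"
      using \<open>finite H\<close> clopen_C_Some by (auto intro: closedin_Union)
    then have "openin (subtopology shift_top Lam)
                 (topspace (subtopology shift_top Lam) - (\<Union>h\<in>H. C (Some h)))"
      by (rule openin_diff[OF openin_topspace])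
    then have "openin (subtopology shift_top Lam) (Lam - (\<Union>h\<in>H. C (Some h)))"
      by (simp only: topspace_Lam)
    ultimately have "openin (subtopology shift_top Lam) {y \<in> Lam. Phi y 0 \<in> - Some ` H}"
      by simp
    then have "openin (subtopology shift_top Lam) {y \<in> Lam. Phi y i \<in> - Some ` H}"
      by (rule openin_coordinate_preimage)
    then show "openin (subtopology shift_top Lam) {x \<in> Lam. Phi x i \<notin> Some ` H}" by simp
  qed
  then show ?thesis
    unfolding continuous_map_in_subtopology topspace_Lam
    using Phi_into by (simp add: image_subset_iff_funcset)
qed

end

end

theorem mainTheorem2:
  fixes Lam :: "'a::countable seq set" and Gam :: "'b::countable seq set"
    and Phi :: "'a seq \<Rightarrow> 'b seq" and d :: 'b
  assumes "shift_space Lam" and "shift_space Gam"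
    and "Phi ` Lam \<subseteq> Gam"
    and "Phi empty_seq = (\<lambda>_. Some d)"
    and "empty_seq \<in> Gam \<Longrightarrow> finitely_defined Lam {x \<in> Lam. Phi x = empty_seq}"
  shows "(continuous_map (subtopology shift_top Lam) (subtopology shift_top Gam) Phi \<and>
          (\<forall>x\<in>Lam. Phi (shift x) = shift (Phi x)))
     \<longleftrightarrow>
         (\<exists>C :: 'b option \<Rightarrow> 'a seq set.
            sliding_block_code Lam C Phi \<and>
            C None = {x \<in> Lam. Phi x = empty_seq} \<and>
            (\<forall>a. a \<notin> letters Gam \<longrightarrow> C (Some a) = {}) \<and>
            (\<forall>a \<in> letters Gam. \<exists>G. finite G \<and>
                 G \<subseteq> {Z \<inter> Lam | Z. Z \<in> gen_cylinders} \<and> C (Some a) = \<Union>G) \<and>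
            finite {a \<in> letters Gam. C (Some a) \<noteq> {}} \<and>
            (\<forall>M::nat. M \<ge> 1 \<longrightarrow> (\<exists>F. finite F \<and> F \<subseteq> letters Lam \<and>
                 (\<forall>n. 1 \<le> n \<and> n \<le> M \<longrightarrow>
                    (shift ^^ (n - 1)) ` (gen_cyl empty_seq F \<inter> Lam) \<subseteq> C (Some d)))))"
    (is "?continuous_commuting \<longleftrightarrow> (\<exists>C. ?sliding C)")
proof -
  interpret shift_space_map Lam Gam Phi d
    using assms(1-4) by unfold_locales
  show ?thesis
  proof
    assume ?continuous_commuting
    then have continuous: "continuous_map (subtopology shift_top Lam) (subtopology shift_top Gam) Phi"
      and commutes: "\<forall>x\<in>Lam. Phi (shift x) = shift (Phi x)" by simp_all
    note facts = continuous commutes assms(5)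
    show "\<exists>C. ?sliding C"
      by (intro exI[of _ symbol_class] conjI allI impI ballI)
        (assumption | rule facts sliding_block_code_symbol_class symbol_class_None
          symbol_class_eq_empty_if_not_letter symbol_class_finite_Union_cylinders
          finite_nonempty_symbol_classes symbol_class_near_empty_seq)+
  next
    assume "\<exists>C. ?sliding C"
    then obtain C where "?sliding C" ..
    then show ?continuous_commuting
      by (elim conjE)
        (intro conjI continuous_if_sliding_block_code commutes_if_sliding_block_code; assumption)
  qed
qed

end
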